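(* Let $n\ge1$ and $0\le k\le n-1$, and let $(\pi,S)\in\mathcal{B}^{>}_{n-1,k}$. Then (a) $\mathrm{fmaj}(\phi^{|}_{n,k}(i,(\pi,S)))=\mathrm{fmaj}((\pi,S))+2i$ for every $i\in\{0,1,\dots,n-k-1\}$; (b) $\mathrm{fmaj}(\phi^{|}_{\overline{n},k}(i,(\pi,S)))=\mathrm{fmaj}((\pi,S))+2i-1$ for every $i\in\{1,\dots,n-k-1\}$; (c) $\mathrm{fmaj}(\phi^{|}_{\overline{n},k}(0,(\pi,S)))=\mathrm{fmaj}((\pi,S))+2n-2k-1$.
   Context: $\mathcal{B}_m$ is the group of signed permutations of $[m]$ (bijections $\pi$ of $\{\pm1,\dots,\pm m\}$ with $\pi(-i)=-\pi(i)$, written $\pi=\pi_1\cdots\pi_m$), integers ordered naturally, $\overline{x}=-x$. Set $\pi_0=0$; $\mathrm{Des}_B(\pi)=\{i\in\{0,\dots,m-1\}:\pi_i>\pi_{i+1}\}$, $\mathrm{neg}(\pi)=|\{i:\pi_i<0\}|$, $\mathrm{fmaj}(\pi)=\sum_{i\in\mathrm{Des}_B(\pi)}2i+\mathrm{neg}(\pi)$. Let $\mathcal{B}^{>}_{m,k}=\{(\pi,S):\pi\in\mathcal{B}_m,\ S\subseteq\mathrm{Des}_B(\pi),\ |S|=k\}$ and for $(\pi,S)\in\mathcal{B}^{>}_{m,k}$, $\mathrm{fmaj}((\pi,S))=\mathrm{fmaj}(\pi)-\sum_{j\in S}\bigl(2|\mathrm{Des}_B(\pi)\cap\{j,\dots,m-1\}|-1\bigr)$.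 Positions: for $p\in\{0,1,\dots,m\}$, position $p$ of $\pi$ is the space immediately after $\pi_p$ (position $0$ is before $\pi_1$, position $m$ is at the end). The fmaj-labelling of $(\pi,S)\in\mathcal{B}^{>}_{m,k}$ labels the positions not in $S$ as follows: position $m$ gets label $0$; the positions in $\mathrm{Des}_B(\pi)\setminus S$ get labels $1,2,\dots$ in order from right to left (decreasing position); the remaining unlabelled positions in $\{0,\dots,m-1\}\setminus\mathrm{Des}_B(\pi)$ get the next consecutive labels in order from left to right. Thus the labels are $0,1,\dots,m-k$. Insertion: for $\alpha\in\{n,\overline{n}\}$ and $(\pi,S)\in\mathcal{B}^{>}_{n-1,k}$ and a label $i$, let $p$ be the position of $(\pi,S)$ with label $i$, and let $\tau=\pi_1\cdots\pi_p\,\alpha\,\pi_{p+1}\cdots\pi_{n-1}\in\mathcal{B}_n$. Starred positions $j\in S$ with $j<p$ remain starred at $j$; each starred position $j\in S$ with $j>p$ (which corresponds to the descent $j+1$ of $\tau$) is moved one descent to the left, i.e. replaced by the largest element of $\mathrm{Des}_B(\tau)$ smaller than $j+1$. Let $T$ be the resulting set of starred positions. Define $\phi^{|}_{\alpha,k}(i,(\pi,S))=(\tau,T)$, a map $\{0,1,\dots,n-k-1\}\times\mathcal{B}^{>}_{n-1,k}\to\mathcal{B}^{>}_{n,k}$. *)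

theory Defs
  imports Main
begin

definition signed_perms :: "nat \<Rightarrow> int list set" where
  "signed_perms m = {xs. length xs = m \<and> abs ` set xs = {1..int m}}"

definition pi_at :: "int list \<Rightarrow> nat \<Rightarrow> int" where
  "pi_at xs i = (if i = 0 then 0 else xs ! (i - 1))"

definition desB :: "int list \<Rightarrow> nat set" where
  "desB xs = {i. i < length xs \<and> pi_at xs i > pi_at xs (Suc i)}"

definition negB :: "int list \<Rightarrow> nat" where
  "negB xs = card {i. i < length xs \<and> xs ! i < 0}"

definition fmaj :: "int list \<Rightarrow> nat" where
  "fmaj xs = (\<Sum>i\<in>desB xs. 2 * i) + negB xs"

definition BDes :: "nat \<Rightarrow> nat \<Rightarrow> (int list \<times> nat set) set" where
  "BDes m k = {(xs, S). xs \<in> signed_perms m \<and> S \<subseteq> desB xs \<and> card S = k}"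

definition fmajP :: "int list \<times> nat set \<Rightarrow> int" where
  "fmajP p = (case p of (xs, S) \<Rightarrow>
     int (fmaj xs) - (\<Sum>j\<in>S. 2 * int (card (desB xs \<inter> {j..<length xs})) - 1))"

text \<open>The position carrying label i in the fmaj-labelling of (pi, S).\<close>
definition label_pos :: "int list \<Rightarrow> nat set \<Rightarrow> nat \<Rightarrow> nat" where
  "label_pos xs S i =
    (let m = length xs; D = desB xs - S; N = {0..<m} - desB xs in
     if i = 0 then m
     else if i \<le> card D then rev (sorted_list_of_set D) ! (i - 1)
     else sorted_list_of_set N ! (i - card D - 1))"

text \<open>The insertion map phi^|_{alpha,k} (k only restricts the domain).\<close>
definition phi_ins :: "int \<Rightarrow> nat \<Rightarrow> int list \<times> nat set \<Rightarrow> int list \<times> nat set" where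
  "phi_ins \<alpha> i p = (case p of (xs, S) \<Rightarrow>
     (let q = label_pos xs S i; \<tau> = take q xs @ \<alpha> # drop q xs in
      (\<tau>, {j \<in> S. j < q} \<union> (\<lambda>j. Max {d \<in> desB \<tau>. d < Suc j}) ` {j \<in> S. q < j})))"

end

theory Submission
  imports Defs
begin

(*
  Inserting a letter a at position q of pi keeps the descents left of q, shifts those right of
  q by one, and creates new descents only at q (if a = -n) or at q + 1 (if a = n and q is not
  the end); a = -n also adds a negative letter.  For a star at j < q the number of later
  descents changes only through this local modification, while a star at j > q moves to the
  last descent t(j) <= j of the new word, which has exactly one more later descent than j had.
  Summing up, inserting n at an unstarred position raises fmaj(pi, S) by twice the label of
  that position, and inserting -n raises it by one less, except at the end position (label 0):
  there -n creates the descent m = n - 1 and each of the k stars gains a later descent.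
*)

lemma sum_split_around:
  fixes f :: "'b::linorder \<Rightarrow> 'a::comm_monoid_add"
  assumes "finite A"
  shows "sum f A = sum f {a \<in> A. a < q} + (if q \<in> A then f q else 0) + sum f {a \<in> A. q < a}"
proof -
  have "A = {a \<in> A. a < q} \<union> (A \<inter> {q}) \<union> {a \<in> A. q < a}"
    by auto
  also have "sum f \<dots> = sum f {a \<in> A. a < q} + sum f (A \<inter> {q}) + sum f {a \<in> A. q < a}"
    using assms by (subst sum.union_disjoint; auto)+
  finally show ?thesis
    by simp
qed

lemma card_split_around:
  fixes A :: "'a::linorder set"
  assumes "finite A"
  shows "card A = card {a \<in> A. a < q} + of_bool (q \<in> A) + card {a \<in> A. q < a}"
  using sum_split_around[OF assms, of "\<lambda>_. 1::nat" q] by simp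

lemma sorted_list_of_set_nth_rank:
  fixes X :: "'a::linorder set"
  assumes X: "finite X" and p: "p < card X"
  shows "sorted_list_of_set X ! p \<in> X" and "card {x \<in> X. x < sorted_list_of_set X ! p} = p"
proof -
  let ?L = "sorted_list_of_set X"
  have L: "sorted_wrt (<) ?L" "distinct ?L" "set ?L = X" "length ?L = card X"
    using X by auto
  then show "?L ! p \<in> X"
    using p nth_mem by metis
  have "{x \<in> X. x < ?L ! p} = (!) ?L ` {..<p}"
  proof (intro set_eqI iffI)
    fix x
    assume x: "x \<in> {x \<in> X. x < ?L ! p}"
    then obtain r where r: "r < length ?L" "x = ?L ! r"
      using L(3) by (metis in_set_conv_nth mem_Collect_eq)
    have "r < p"
    proof (rule ccontr)
      assume "\<not> r < p"
      then have "?L ! p \<le> ?L ! r"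
        using sorted_nth_mono[OF strict_sorted_imp_sorted[OF L(1)]] r by simp
      then show False
        using x r by auto
    qed
    then show "x \<in> (!) ?L ` {..<p}"
      using r by auto
  next
    fix x
    assume "x \<in> (!) ?L ` {..<p}"
    then obtain r where "r < p" "x = ?L ! r"
      by auto
    then show "x \<in> {x \<in> X. x < ?L ! p}"
      using L p sorted_wrt_nth_less[OF L(1), of r p] nth_mem[of r ?L] by simp
  qed
  moreover have "inj_on ((!) ?L) {..<p}"
    using L p by (intro inj_on_nth) auto
  ultimately show "card {x \<in> X. x < ?L ! p} = p"
    by (simp add: card_image)
qed

lemma rev_sorted_list_of_set_nth_rank:
  fixes X :: "'a::linorder set"
  assumes X: "finite X" and p: "p < card X"
  shows "rev (sorted_list_of_set X) ! p \<in> X"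
    and "card {x \<in> X. rev (sorted_list_of_set X) ! p < x} = p"
proof -
  let ?r = "card X - Suc p"
  have r: "?r < card X"
    using p by simp
  have eq: "rev (sorted_list_of_set X) ! p = sorted_list_of_set X ! ?r"
    using p by (simp add: rev_nth)
  show "rev (sorted_list_of_set X) ! p \<in> X"
    unfolding eq using sorted_list_of_set_nth_rank(1)[OF X r] .
  then show "card {x \<in> X. rev (sorted_list_of_set X) ! p < x} = p"
    using card_split_around[OF X, of "sorted_list_of_set X ! ?r"] sorted_list_of_set_nth_rank(2)[OF X r] p
    unfolding eq by simp
qed

(* The descent set left after inserting a letter at position q into a word with descent set D,
   E being the new descents. *)
definition shift_above :: "nat \<Rightarrow> nat set \<Rightarrow> nat set \<Rightarrow> nat set" where
  "shift_above q E D = {d \<in> D. d < q} \<union> E \<union> Suc ` {d \<in> D. q < d}"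

lemma sum_shift_above:
  fixes f :: "nat \<Rightarrow> 'a::ab_group_add"
  assumes D: "finite D" and E: "E \<subseteq> {q, Suc q}"
  shows "sum f (shift_above q E D)
    = sum f D - (if q \<in> D then f q else 0) + sum f E + (\<Sum>d \<in> {d \<in> D. q < d}. f (Suc d) - f d)"
proof -
  have "finite E"
    using E finite_subset by blast
  moreover have "{d \<in> D. d < q} \<inter> E = {}" and "({d \<in> D. d < q} \<union> E) \<inter> Suc ` {d \<in> D. q < d} = {}"
    using E by auto
  ultimately have "sum f (shift_above q E D) = sum f {d \<in> D. d < q} + sum f E + sum f (Suc ` {d \<in> D. q < d})"
    unfolding shift_above_def using D by (simp add: sum.union_disjoint)
  then show ?thesis
    using sum_split_around[OF D, of f q] by (simp add: sum.reindex sum_subtractf)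
qed

lemma card_shift_above:
  assumes "finite D" and "E \<subseteq> {q, Suc q}"
  shows "int (card (shift_above q E D)) = int (card D) + int (card E) - of_bool (q \<in> D)"
  using sum_shift_above[OF assms, of "\<lambda>_. 1::int"] by simp

lemma shift_above_filter_ge:
  assumes "j \<le> q" and "E \<subseteq> {q, Suc q}"
  shows "{d \<in> shift_above q E D. j \<le> d} = shift_above q E {d \<in> D. j \<le> d}"
  using assms by (auto simp: shift_above_def)

lemma Max_shift_above:
  assumes D: "finite D" and E: "E \<subseteq> {q, Suc q}" "E \<noteq> {}" and "q < j"
  defines "t \<equiv> Max {d \<in> shift_above q E D. d < Suc j}"
  shows "q \<le> t" and "t \<le> j"
    and "card {d \<in> shift_above q E D. t \<le> d} = Suc (card {d \<in> D. j \<le> d})"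
proof -
  let ?B = "{d \<in> shift_above q E D. d < Suc j}"
  have fin: "finite ?B"
    by simp
  obtain e where "e \<in> E"
    using E by blast
  then have "e \<in> ?B" and "q \<le> e"
    using E \<open>q < j\<close> by (auto simp: shift_above_def)
  show "q \<le> t"
    unfolding t_def using \<open>q \<le> e\<close> Max_ge[OF fin \<open>e \<in> ?B\<close>] by (rule le_trans)
  have t: "t \<in> ?B"
    unfolding t_def using Max_in[OF fin] \<open>e \<in> ?B\<close> by blast
  then show "t \<le> j"
    by simp
  have "{d \<in> shift_above q E D. t \<le> d} = insert t (Suc ` {d \<in> D. j \<le> d})"
  proof (intro set_eqI iffI)
    fix d
    assume d: "d \<in> {d \<in> shift_above q E D. t \<le> d}"
    show "d \<in> insert t (Suc ` {d \<in> D. j \<le> d})"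
    proof (cases "d < Suc j")
      case True
      then have "d \<le> t"
        unfolding t_def using d Max_ge[OF fin] by blast
      then show ?thesis
        using d by simp
    next
      case False
      then show ?thesis
        using d E \<open>q < j\<close> by (auto simp: shift_above_def)
    qed
  next
    fix d
    assume "d \<in> insert t (Suc ` {d \<in> D. j \<le> d})"
    then show "d \<in> {d \<in> shift_above q E D. t \<le> d}"
      using t \<open>q < j\<close> by (auto simp: shift_above_def)
  qed
  moreover have "t \<notin> Suc ` {d \<in> D. j \<le> d}"
    using \<open>t \<le> j\<close> by auto
  ultimately show "card {d \<in> shift_above q E D. t \<le> d} = Suc (card {d \<in> D. j \<le> d})"
    using D by (simp add: card_image)
qed

lemma Max_shift_above_strict_mono:
  assumes D: "finite D" and E: "E \<subseteq> {q, Suc q}" "E \<noteq> {}"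
    and "j\<^sub>1 \<in> D" "q < j\<^sub>1" "j\<^sub>1 < j\<^sub>2"
  shows "Max {d \<in> shift_above q E D. d < Suc j\<^sub>1} < Max {d \<in> shift_above q E D. d < Suc j\<^sub>2}"
proof -
  have fin: "finite (shift_above q E D)"
    using D E finite_subset by (auto simp: shift_above_def)
  have "Suc j\<^sub>1 \<in> {d \<in> shift_above q E D. d < Suc j\<^sub>2}"
    using assms by (auto simp: shift_above_def)
  then have "Suc j\<^sub>1 \<le> Max {d \<in> shift_above q E D. d < Suc j\<^sub>2}"
    using fin by (intro Max_ge) auto
  moreover have "Max {d \<in> shift_above q E D. d < Suc j\<^sub>1} \<le> j\<^sub>1"
    using Max_shift_above(2)[OF D E \<open>q < j\<^sub>1\<close>] .
  ultimately show ?thesis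
    by simp
qed

definition star_weight :: "nat set \<Rightarrow> nat set \<Rightarrow> int" where
  "star_weight D S = (\<Sum>j\<in>S. 2 * int (card {d \<in> D. j \<le> d}) - 1)"

definition shift_stars :: "nat set \<Rightarrow> nat \<Rightarrow> nat set \<Rightarrow> nat set" where
  "shift_stars D q S = {j \<in> S. j < q} \<union> (\<lambda>j. Max {d \<in> D. d < Suc j}) ` {j \<in> S. q < j}"

lemma star_weight_shift_stars:
  assumes D: "finite D" and E: "E \<subseteq> {q, Suc q}" and S: "S \<subseteq> D" "q \<notin> S"
    and E_ne: "{j \<in> S. q < j} \<noteq> {} \<Longrightarrow> E \<noteq> {}"
  shows "star_weight (shift_above q E D) (shift_stars (shift_above q E D) q S)
    = star_weight D S + 2 * int (card {j \<in> S. j < q}) * (int (card E) - of_bool (q \<in> D))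
      + 2 * int (card {j \<in> S. q < j})"
proof -
  let ?D' = "shift_above q E D"
  let ?t = "\<lambda>j. Max {d \<in> ?D'. d < Suc j}"
  let ?w = "\<lambda>X j. 2 * int (card {d \<in> X. j \<le> d}) - 1"
  let ?lo = "{j \<in> S. j < q}" and ?hi = "{j \<in> S. q < j}"
  have finS: "finite S"
    using D S finite_subset by blast
  have w_lo: "?w ?D' j = ?w D j + 2 * (int (card E) - of_bool (q \<in> D))" if "j \<in> ?lo" for j
  proof -
    have "int (card {d \<in> ?D'. j \<le> d}) = int (card {d \<in> D. j \<le> d}) + int (card E) - of_bool (q \<in> D)"
      using that D E by (simp add: shift_above_filter_ge card_shift_above)
    then show ?thesis
      by simp
  qed
  have E_ne': "E \<noteq> {}" if "j \<in> ?hi" for j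
    using E_ne that by blast
  have w_hi: "?w ?D' (?t j) = ?w D j + 2" if "j \<in> ?hi" for j
    using Max_shift_above(3)[OF D E E_ne'[OF that]] that by simp
  have "strict_mono_on ?hi ?t"
    using Max_shift_above_strict_mono[OF D E E_ne'] S by (auto simp: strict_mono_on_def)
  then have inj: "inj_on ?t ?hi"
    by (rule strict_mono_on_imp_inj_on)
  have disj: "?lo \<inter> ?t ` ?hi = {}"
    using Max_shift_above(1)[OF D E E_ne'] by fastforce
  let ?c = "int (card E) - of_bool (q \<in> D)"
  have "(\<Sum>j\<in>?lo. ?w ?D' j) = (\<Sum>j\<in>?lo. ?w D j + 2 * ?c)"
    by (rule sum.cong[OF refl]) (rule w_lo)
  then have lo: "(\<Sum>j\<in>?lo. ?w ?D' j) = (\<Sum>j\<in>?lo. ?w D j) + 2 * int (card ?lo) * ?c"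
    unfolding sum.distrib by simp
  have "(\<Sum>j\<in>?hi. ?w ?D' (?t j)) = (\<Sum>j\<in>?hi. ?w D j + 2)"
    by (rule sum.cong[OF refl]) (rule w_hi)
  then have hi: "(\<Sum>j\<in>?hi. ?w ?D' (?t j)) = (\<Sum>j\<in>?hi. ?w D j) + 2 * int (card ?hi)"
    unfolding sum.distrib by simp
  have "star_weight ?D' (shift_stars ?D' q S) = (\<Sum>j\<in>?lo. ?w ?D' j) + (\<Sum>j\<in>?hi. ?w ?D' (?t j))"
    unfolding star_weight_def shift_stars_def using finS disj inj
    by (simp add: sum.union_disjoint sum.reindex)
  also have "\<dots> = (\<Sum>j\<in>?lo. ?w D j) + (\<Sum>j\<in>?hi. ?w D j)
      + 2 * int (card ?lo) * ?c + 2 * int (card ?hi)"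
    unfolding lo hi by simp
  also have "(\<Sum>j\<in>?lo. ?w D j) + (\<Sum>j\<in>?hi. ?w D j) = star_weight D S"
    unfolding star_weight_def using sum_split_around[OF finS, of "?w D" q] S(2) by simp
  finally show ?thesis .
qed

definition insert_at :: "nat \<Rightarrow> 'a \<Rightarrow> 'a list \<Rightarrow> 'a list" where
  "insert_at q a xs = take q xs @ a # drop q xs"

lemma length_insert_at [simp]: "q \<le> length xs \<Longrightarrow> length (insert_at q a xs) = Suc (length xs)"
  by (simp add: insert_at_def)

lemma pi_at_insert_at:
  assumes "q \<le> length xs" and "i \<le> Suc (length xs)"
  shows "pi_at (insert_at q a xs) i =
    (if i \<le> q then pi_at xs i else if i = Suc q then a else pi_at xs (i - 1))"
  using assms by (auto simp: pi_at_def insert_at_def nth_append nth_Cons' min_def numeral_2_eq_2)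

lemma negB_insert_at: "negB (insert_at q a xs) = negB xs + of_bool (a < 0)"
proof -
  have negB_filter: "negB ys = length (filter (\<lambda>x. x < 0) ys)" for ys
    by (simp add: negB_def length_filter_conv_card)
  have "length (filter (\<lambda>x. x < 0) xs) = length (filter (\<lambda>x. x < (0::int)) (take q xs @ drop q xs))"
    by simp
  then show ?thesis
    by (simp add: negB_filter insert_at_def del: append_take_drop_id)
qed

lemma desB_subset_lessThan: "desB xs \<subseteq> {..<length xs}"
  by (auto simp: desB_def)

lemma finite_desB [simp]: "finite (desB xs)"
  using desB_subset_lessThan finite_subset by blast

lemma desB_insert_at:
  assumes "q \<le> length xs"
  shows "desB (insert_at q a xs) = shift_above q
    ({d. d = q \<and> a < pi_at xs q} \<union> {d. d = Suc q \<and> q < length xs \<and> pi_at xs (Suc q) < a}) (desB xs)"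
proof (rule set_eqI)
  fix d
  consider "d < q" | "d = q" | "d = Suc q" | d' where "d = Suc d'" "q < d'"
    by (metis linorder_neqE_nat not_less_eq Suc_lessE)
  then show "d \<in> desB (insert_at q a xs) \<longleftrightarrow> d \<in> shift_above q
    ({d. d = q \<and> a < pi_at xs q} \<union> {d. d = Suc q \<and> q < length xs \<and> pi_at xs (Suc q) < a}) (desB xs)"
    by cases (use assms in \<open>auto simp: desB_def shift_above_def pi_at_insert_at\<close>)
qed

lemma fmajP_eq_star_weight: "fmajP (xs, S) = int (fmaj xs) - star_weight (desB xs) S"
proof -
  have "desB xs \<inter> {j..<length xs} = {d \<in> desB xs. j \<le> d}" for j
    using desB_subset_lessThan[of xs] by auto
  then show ?thesis
    by (simp add: fmajP_def star_weight_def)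
qed

lemma fmaj_insert_at:
  assumes "desB (insert_at q a xs) = shift_above q E (desB xs)" and "E \<subseteq> {q, Suc q}"
  shows "int (fmaj (insert_at q a xs)) = int (fmaj xs) + of_bool (a < 0) + (\<Sum>d\<in>E. 2 * int d)
    + 2 * int (card {d \<in> desB xs. q < d}) - of_bool (q \<in> desB xs) * 2 * int q"
  using sum_shift_above[OF finite_desB assms(2), of "\<lambda>d. 2 * int d"]
  unfolding fmaj_def assms(1) by (simp add: negB_insert_at of_nat_sum)

lemma fmajP_insert_at:
  assumes desc: "desB (insert_at q a xs) = shift_above q E (desB xs)" and E: "E \<subseteq> {q, Suc q}"
    and S: "S \<subseteq> desB xs" "q \<notin> S" and E_ne: "{j \<in> S. q < j} \<noteq> {} \<Longrightarrow> E \<noteq> {}"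
  shows "fmajP (insert_at q a xs, shift_stars (desB (insert_at q a xs)) q S)
    = fmajP (xs, S) + of_bool (a < 0) + (\<Sum>d\<in>E. 2 * int d) + 2 * int (card {d \<in> desB xs. q < d})
      - of_bool (q \<in> desB xs) * 2 * int q
      - 2 * int (card {j \<in> S. j < q}) * (int (card E) - of_bool (q \<in> desB xs))
      - 2 * int (card {j \<in> S. q < j})"
  using fmaj_insert_at[OF desc E] star_weight_shift_stars[OF finite_desB E S E_ne]
  by (simp add: fmajP_eq_star_weight desc)

(* The label of an unstarred position p in the fmaj-labelling of (pi, S); junk for p in S. *)
definition fmaj_label :: "int list \<Rightarrow> nat set \<Rightarrow> nat \<Rightarrow> nat" where
  "fmaj_label xs S p =
    (if p = length xs then 0
     else if p \<in> desB xs then Suc (card {d \<in> desB xs - S. p < d})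
     else Suc (card (desB xs - S) + card {y \<in> {0..<length xs} - desB xs. y < p}))"

lemma fmaj_label_eq_counts:
  assumes S: "S \<subseteq> desB xs" "q \<notin> S" and q: "q < length xs"
  shows "int (fmaj_label xs S q) = 1 + int (card {d \<in> desB xs. q < d}) - int (card {j \<in> S. q < j})
    + (if q \<in> desB xs then 0 else int q - int (card {j \<in> S. j < q}))"
proof -
  let ?D = "desB xs" and ?N = "{0..<length xs} - desB xs"
  have finS: "finite S"
    using S(1) by (rule finite_subset) simp
  have card_diff: "card {d \<in> ?D - S. P d} + card {j \<in> S. P j} = card {d \<in> ?D. P d}" for P
  proof -
    have "card {d \<in> ?D. P d} = card ({d \<in> ?D - S. P d} \<union> {j \<in> S. P j})"
      by (rule arg_cong[where f = card]) (use S in auto)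
    also have "\<dots> = card {d \<in> ?D - S. P d} + card {j \<in> S. P j}"
      by (rule card_Un_disjoint) (use finS in auto)
    finally show ?thesis
      by simp
  qed
  show ?thesis
  proof (cases "q \<in> ?D")
    case True
    then show ?thesis
      using q card_diff[of "\<lambda>d. q < d"] by (simp add: fmaj_label_def)
  next
    case False
    have "{0..<q} = {d \<in> ?D. d < q} \<union> {y \<in> ?N. y < q}"
      using q by auto
    then have "card {0..<q} = card {d \<in> ?D. d < q} + card {y \<in> ?N. y < q}"
      by (simp add: card_Un_disjoint disjoint_iff)
    moreover have "card (?D - S) + card S = card ?D"
      using card_Diff_subset[OF finS S(1)] card_mono[OF finite_desB S(1)] by simp
    moreover have "card ?D = card {d \<in> ?D. d < q} + card {d \<in> ?D. q < d}"
      using card_split_around[OF finite_desB, of xs q] False by simp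
    moreover have "card S = card {j \<in> S. j < q} + card {j \<in> S. q < j}"
      using card_split_around[OF finS, of q] S(2) by simp
    moreover have "card {d \<in> ?D - S. q < d} + card {j \<in> S. q < j} = card {d \<in> ?D. q < d}"
      by (rule card_diff)
    ultimately show ?thesis
      using q False unfolding fmaj_label_def by simp
  qed
qed

lemma label_pos_fmaj_label:
  assumes S: "S \<subseteq> desB xs" and i: "i \<le> length xs - card S"
  shows "label_pos xs S i \<le> length xs \<and> label_pos xs S i \<notin> S \<and> fmaj_label xs S (label_pos xs S i) = i"
proof -
  let ?m = "length xs" and ?D = "desB xs"
  let ?D\<^sub>0 = "?D - S" and ?N = "{0..<?m} - ?D"
  have finS: "finite S"
    using S by (rule finite_subset) simp
  have D: "?D \<subseteq> {0..<?m}"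
    using desB_subset_lessThan[of xs] by auto
  have card_D\<^sub>0: "card ?D\<^sub>0 = card ?D - card S" and "card S \<le> card ?D"
    using S finS by (simp_all add: card_Diff_subset card_mono)
  moreover have "card ?N = ?m - card ?D" and "card ?D \<le> ?m"
    using D card_mono[OF _ D] by (simp_all add: card_Diff_subset)
  ultimately have i_N: "i - card ?D\<^sub>0 - 1 < card ?N" if "card ?D\<^sub>0 < i"
    using i that by linarith
  have lp: "label_pos xs S i = (if i = 0 then ?m
      else if i \<le> card ?D\<^sub>0 then rev (sorted_list_of_set ?D\<^sub>0) ! (i - 1)
      else sorted_list_of_set ?N ! (i - card ?D\<^sub>0 - 1))"
    by (simp add: label_pos_def Let_def)
  consider "i = 0" | "0 < i" "i \<le> card ?D\<^sub>0" | "card ?D\<^sub>0 < i"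
    by linarith
  then show ?thesis
  proof cases
    case 1
    then show ?thesis
      using lp S desB_subset_lessThan[of xs] by (auto simp: fmaj_label_def)
  next
    case 2
    then have "i - 1 < card ?D\<^sub>0"
      by simp
    from rev_sorted_list_of_set_nth_rank[OF _ this] show ?thesis
      using lp 2 desB_subset_lessThan[of xs] by (auto simp: fmaj_label_def)
  next
    case 3
    from sorted_list_of_set_nth_rank[OF _ i_N[OF 3]] show ?thesis
      using lp 3 S by (auto simp: fmaj_label_def)
  qed
qed

lemma fmajP_insert_max:
  assumes S: "S \<subseteq> desB xs" "q \<notin> S" and q: "q \<le> length xs"
    and a: "0 < a" "\<forall>x\<in>set xs. x < a"
  shows "fmajP (insert_at q a xs, shift_stars (desB (insert_at q a xs)) q S)
    = fmajP (xs, S) + 2 * int (fmaj_label xs S q)"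
proof -
  have large: "pi_at xs p < a" if "p \<le> length xs" for p
    using a that by (auto simp: pi_at_def)
  have "{d. d = q \<and> a < pi_at xs q} \<union> {d. d = Suc q \<and> q < length xs \<and> pi_at xs (Suc q) < a}
      = (if q < length xs then {Suc q} else {})"
    using large[OF q] large[of "Suc q"] by auto
  then have desc: "desB (insert_at q a xs) = shift_above q (if q < length xs then {Suc q} else {}) (desB xs)"
    using desB_insert_at[OF q, of a] by simp
  note insert = fmajP_insert_at[OF desc _ S]
  show ?thesis
  proof (cases "q < length xs")
    case True
    then show ?thesis
      using insert fmaj_label_eq_counts[OF S True] a by (cases "q \<in> desB xs") auto
  next
    case False
    then have end_pos: "q = length xs" "length xs \<notin> desB xs"
        "{d \<in> desB xs. length xs < d} = {}" "{j \<in> S. length xs < j} = {}"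
      using q S desB_subset_lessThan[of xs] by auto
    show ?thesis
      using insert a by (simp add: end_pos fmaj_label_def)
  qed
qed

lemma fmajP_insert_min:
  assumes S: "S \<subseteq> desB xs" "q \<notin> S" and q: "q \<le> length xs"
    and a: "a < 0" "\<forall>x\<in>set xs. a < x"
  shows "fmajP (insert_at q a xs, shift_stars (desB (insert_at q a xs)) q S)
    = fmajP (xs, S) + (if q = length xs then 2 * int (length xs) - 2 * int (card S) + 1
                       else 2 * int (fmaj_label xs S q) - 1)"
proof -
  have small: "a < pi_at xs p" if "p \<le> length xs" for p
    using a that by (auto simp: pi_at_def)
  have E: "{d. d = q \<and> a < pi_at xs q} \<union> {d. d = Suc q \<and> q < length xs \<and> pi_at xs (Suc q) < a} = {q}"
    using small[OF q] small[of "Suc q"] by fastforce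
  have desc: "desB (insert_at q a xs) = shift_above q {q} (desB xs)"
    using desB_insert_at[OF q, of a] unfolding E .
  note insert = fmajP_insert_at[OF desc _ S]
  show ?thesis
  proof (cases "q < length xs")
    case True
    then show ?thesis
      using insert fmaj_label_eq_counts[OF S True] a by (cases "q \<in> desB xs") auto
  next
    case False
    then have end_pos: "q = length xs" "length xs \<notin> desB xs"
        "{d \<in> desB xs. length xs < d} = {}" "{j \<in> S. length xs < j} = {}" "{j \<in> S. j < length xs} = S"
      using q S desB_subset_lessThan[of xs] by auto
    show ?thesis
      using insert a by (simp add: end_pos)
  qed
qed

lemma phi_ins_eq:
  "phi_ins a i (xs, S) = (let q = label_pos xs S i; \<tau> = insert_at q a xs in (\<tau>, shift_stars (desB \<tau>) q S))"
  by (simp add: phi_ins_def insert_at_def shift_stars_def Let_def)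

theorem lemma2p5:
  fixes n k :: nat and xs :: "int list" and S :: "nat set"
  assumes "1 \<le> n" and "k \<le> n - 1" and "(xs, S) \<in> BDes (n - 1) k"
  shows "(\<forall>i \<in> {0..n - k - 1}. fmajP (phi_ins (int n) i (xs, S)) = fmajP (xs, S) + 2 * int i)
    \<and> (\<forall>i \<in> {1..n - k - 1}. fmajP (phi_ins (- int n) i (xs, S)) = fmajP (xs, S) + 2 * int i - 1)
    \<and> fmajP (phi_ins (- int n) 0 (xs, S)) = fmajP (xs, S) + 2 * int n - 2 * int k - 1"
proof -
  have len: "length xs = n - 1" and entries: "abs ` set xs = {1..int (n - 1)}"
    and S: "S \<subseteq> desB xs" "card S = k"
    using assms(3) by (auto simp: BDes_def signed_perms_def)
  have bounds: "\<forall>x\<in>set xs. x < int n" "\<forall>x\<in>set xs. - int n < x"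
    using entries by force+
  have label: "label_pos xs S i \<le> length xs \<and> label_pos xs S i \<notin> S
      \<and> fmaj_label xs S (label_pos xs S i) = i" if "i \<le> n - k - 1" for i
    using label_pos_fmaj_label[OF S(1)] that len S(2) by simp
  have "fmajP (phi_ins (int n) i (xs, S)) = fmajP (xs, S) + 2 * int i" if "i \<le> n - k - 1" for i
    using label[OF that] fmajP_insert_max[OF S(1) _ _ _ bounds(1)] assms(1)
    by (simp add: phi_ins_eq Let_def)
  moreover have "fmajP (phi_ins (- int n) i (xs, S)) = fmajP (xs, S) + 2 * int i - 1"
    if "1 \<le> i" "i \<le> n - k - 1" for i
  proof -
    have "label_pos xs S i \<noteq> length xs"
      using label[OF that(2)] that(1) by (auto simp: fmaj_label_def)
    then show ?thesis
      using label[OF that(2)] fmajP_insert_min[OF S(1) _ _ _ bounds(2)] assms(1)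
      by (simp add: phi_ins_eq Let_def)
  qed
  moreover have "fmajP (phi_ins (- int n) 0 (xs, S)) = fmajP (xs, S) + 2 * int n - 2 * int k - 1"
  proof -
    have "label_pos xs S 0 = length xs"
      by (simp add: label_pos_def)
    then show ?thesis
      using label[of 0] fmajP_insert_min[OF S(1) _ _ _ bounds(2)] len S(2) assms(1)
      by (simp add: phi_ins_eq Let_def of_nat_diff)
  qed
  ultimately show ?thesis
    by auto
qed

end
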